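(* Let $G=(G'_\ell,A'_\ell,B'_\ell)\circ\cdots\circ(G'_1,A'_1,B'_1)\circ G'_0$ be the compact canonical decomposition of a graph $G$. For $S\subseteq V(G)$ let $S_i=S\cap V(G'_i)$. Then $S$ is a fixing set of $G$ if and only if $S_i$ is a fixing set of $G'_i$ for every $i=0,1,\dots,\ell$. Consequently $\mathrm{Fix}(G)=\sum_{i=0}^{\ell}\mathrm{Fix}(G'_i)$.
   Context: All graphs are finite and simple. A set $S\subseteq V(G)$ is a fixing set of $G$ if the only automorphism of $G$ fixing every vertex of $S$ is the identity; $\mathrm{Fix}(G)$ is the minimum size of a fixing set. A graph is split if its vertex set can be partitioned into $A$ (inducing a complete graph) and $B$ (inducing an independent set), either possibly empty; $(A,B)$ is a $KS$-partition. For split $(G,A,B)$ with $V(G)\neq\emptyset$ and a graph $H$, $V(H)\ne\emptyset$, on disjoint vertices, $(G,A,B)\circ H$ is the graph on $V(G)\cup V(H)$ with edge set $E(G)\cup E(H)\cup\{uv:u\in A,v\in V(H)\}$ (associative; iterated compositions read right-nested). A graph is indecomposable if it is not isomorphic to any such composition. Canonical decomposition (Tyshkevich): every graph is $G=(G_k,A_k,B_k)\circ\cdots\circ(G_1,A_1,B_1)\circ G_0$ with every $G_i$ indecomposable, unique up to componentwise isomorphism. A single-vertex component $(G_i,A_i,B_i)$, $i\ge1$, has type $K_1$ if $A_i=V(G_i)$ and type $S_1$ if $B_i=V(G_i)$; if $G_0$ and $G_1$ are both single-vertex graphs, $G_0$ gets the type of $G_1$. The compact canonical decomposition is obtained by replacing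 each maximal run of consecutive single-vertex components of the same type by a single component: $m$ components of type $K_1$ by $K_m$ with $KS$-partition $(V(K_m),\emptyset)$, and $m$ components of type $S_1$ by the edgeless graph on $m$ vertices with $KS$-partition $(\emptyset,\text{all vertices})$ (a run containing $G_0$ yields the new $G'_0$). *)

theory Defs
  imports Main
begin

definition graph :: "'a set \<Rightarrow> 'a set set \<Rightarrow> bool" where
  "graph V E \<longleftrightarrow> finite V \<and>
     (\<forall>e\<in>E. \<exists>u v. u \<in> V \<and> v \<in> V \<and> u \<noteq> v \<and> e = {u, v})"

definition complete_edges :: "'a set \<Rightarrow> 'a set set" where
  "complete_edges V = {e. \<exists>u v. u \<in> V \<and> v \<in> V \<and> u \<noteq> v \<and> e = {u, v}}"

definition induced_edges :: "'a set set \<Rightarrow> 'a set \<Rightarrow> 'a set set" where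
  "induced_edges E X = {e \<in> E. e \<subseteq> X}"

definition automorphism :: "'a set \<Rightarrow> 'a set set \<Rightarrow> ('a \<Rightarrow> 'a) \<Rightarrow> bool" where
  "automorphism V E f \<longleftrightarrow> bij_betw f V V \<and>
     (\<forall>u\<in>V. \<forall>v\<in>V. {u, v} \<in> E \<longleftrightarrow> {f u, f v} \<in> E)"

definition fixing_set :: "'a set \<Rightarrow> 'a set set \<Rightarrow> 'a set \<Rightarrow> bool" where
  "fixing_set V E S \<longleftrightarrow> S \<subseteq> V \<and>
     (\<forall>f. automorphism V E f \<and> (\<forall>s\<in>S. f s = s) \<longrightarrow> (\<forall>v\<in>V. f v = v))"

definition Fix :: "'a set \<Rightarrow> 'a set set \<Rightarrow> nat" where
  "Fix V E = Min (card ` {S. fixing_set V E S})"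

definition KS_partition :: "'a set \<Rightarrow> 'a set set \<Rightarrow> 'a set \<Rightarrow> 'a set \<Rightarrow> bool" where
  "KS_partition V E A B \<longleftrightarrow> A \<union> B = V \<and> A \<inter> B = {} \<and>
     (\<forall>u\<in>A. \<forall>v\<in>A. u \<noteq> v \<longrightarrow> {u, v} \<in> E) \<and>
     (\<forall>u\<in>B. \<forall>v\<in>B. {u, v} \<notin> E)"

text \<open>Indecomposable: (V,E) is not (isomorphic to) a composition (G,A,B) o H,
  i.e. there is no splitting of V into nonempty X (carrying a split graph with
  KS-partition (A,B)) and Y such that the edges between X and Y are exactly
  those between A and Y.\<close>

definition indecomposable :: "'a set \<Rightarrow> 'a set set \<Rightarrow> bool" where
  "indecomposable V E \<longleftrightarrow> \<not> (\<exists>X Y A B. X \<union> Y = V \<and> X \<inter> Y = {} \<and> X \<noteq> {} \<and> Y \<noteq> {} \<and>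
       KS_partition X (induced_edges E X) A B \<and>
       (\<forall>u\<in>X. \<forall>v\<in>Y. {u, v} \<in> E \<longleftrightarrow> u \<in> A))"

text \<open>Canonical decomposition (G_k,A_k,B_k) o ... o (G_1,A_1,B_1) o G_0 of (V,E),
  with components indexed 0..k: G_i = (VV i, EE i), KS-partition (AA i, BB i)
  for 1 \<le> i \<le> k (AA 0, BB 0 are irrelevant).  The composition is right-nested,
  so A_i is joined to all vertices of G_j for every j < i.\<close>

definition canon_decomp ::
  "'a set \<Rightarrow> 'a set set \<Rightarrow> nat \<Rightarrow> (nat \<Rightarrow> 'a set) \<Rightarrow> (nat \<Rightarrow> 'a set set)
     \<Rightarrow> (nat \<Rightarrow> 'a set) \<Rightarrow> (nat \<Rightarrow> 'a set) \<Rightarrow> bool" where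
  "canon_decomp V E k VV EE AA BB \<longleftrightarrow>
     (\<forall>i\<le>k. \<forall>j\<le>k. i \<noteq> j \<longrightarrow> VV i \<inter> VV j = {}) \<and>
     (\<forall>i\<le>k. graph (VV i) (EE i)) \<and>
     (\<forall>i. 1 \<le> i \<and> i \<le> k \<longrightarrow> VV i \<noteq> {} \<and> KS_partition (VV i) (EE i) (AA i) (BB i)) \<and>
     (1 \<le> k \<longrightarrow> VV 0 \<noteq> {}) \<and>
     (\<forall>i\<le>k. indecomposable (VV i) (EE i)) \<and>
     V = (\<Union>i\<le>k. VV i) \<and>
     E = (\<Union>i\<le>k. EE i) \<union>
         {{u, v} | u v. \<exists>i j. j < i \<and> i \<le> k \<and> u \<in> AA i \<and> v \<in> VV j}"

text \<open>Component i is single-vertex iff card (VV i) = 1.  Consecutive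
  components i, i+1 are merged iff both are single-vertex of the same type
  (type K_1: AA i = VV i, type S_1: BB i = VV i); G_0, if single-vertex and
  G_1 is single-vertex, has the type of G_1.  The map g sends an index of the
  canonical decomposition to the index of the component of the compact one
  containing it.\<close>

definition merge_next :: "nat \<Rightarrow> (nat \<Rightarrow> 'a set) \<Rightarrow> (nat \<Rightarrow> 'a set) \<Rightarrow> nat \<Rightarrow> bool" where
  "merge_next k VV AA i \<longleftrightarrow> i < k \<and> card (VV i) = 1 \<and> card (VV (Suc i)) = 1 \<and>
     (i = 0 \<or> (AA i = VV i \<longleftrightarrow> AA (Suc i) = VV (Suc i)))"

definition typeK :: "nat \<Rightarrow> (nat \<Rightarrow> 'a set) \<Rightarrow> (nat \<Rightarrow> 'a set) \<Rightarrow> nat \<Rightarrow> bool" where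
  "typeK k VV AA i \<longleftrightarrow> (if i = 0 then 1 \<le> k \<and> card (VV 1) = 1 \<and> AA 1 = VV 1 else AA i = VV i)"

definition compact_canon_decomp ::
  "'a set \<Rightarrow> 'a set set \<Rightarrow> nat \<Rightarrow> (nat \<Rightarrow> 'a set) \<Rightarrow> (nat \<Rightarrow> 'a set set)
     \<Rightarrow> (nat \<Rightarrow> 'a set) \<Rightarrow> (nat \<Rightarrow> 'a set) \<Rightarrow> bool" where
  "compact_canon_decomp V E l VV' EE' AA' BB' \<longleftrightarrow>
     (\<exists>k VV EE AA BB g. canon_decomp V E k VV EE AA BB \<and>
        g 0 = 0 \<and>
        (\<forall>i<k. g (Suc i) = (if merge_next k VV AA i then g i else Suc (g i))) \<and>
        g k = l \<and>
        (\<forall>j\<le>l. VV' j = (\<Union>i\<in>{i. i \<le> k \<and> g i = j}. VV i)) \<and>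
        (\<forall>i\<le>k. EE' (g i) =
            (if card (VV i) = 1
             then (if typeK k VV AA i then complete_edges (VV' (g i)) else {})
             else EE i)) \<and>
        (\<forall>i. 1 \<le> i \<and> i \<le> k \<longrightarrow> (AA' (g i), BB' (g i)) =
            (if card (VV i) = 1
             then (if AA i = VV i then (VV' (g i), {}) else ({}, VV' (g i)))
             else (AA i, BB i))))"

end

theory Submission
  imports Defs
begin

(*
  Every automorphism of G maps each component G'_i of the compact decomposition onto
  itself.  This is shown top-down: an automorphism that fixes the union L_m of
  G'_0, ..., G'_m setwise also fixes G'_m.  If G'_m is indecomposable with at least two
  vertices, it is a split module of L_m; since an indecomposable set meets every split
  module trivially, its image is either itself or disjoint from it, and disjointness is
  impossible because an outside vertex sees the two sides of its KS-partition
  differently.  If G'_m is a merged run of K_1's (S_1's), it is exactly the set of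
  universal (isolated) vertices of L_m: a universal (isolated) vertex further down would
  contradict indecomposability or the maximality of the run.
  Conversely, the KS-partition of an indecomposable split graph with at least two
  vertices is unique, hence preserved by its automorphisms, so each automorphism of G'_i
  extends by the identity to one of G.  Hence Aut(G) is the product of the Aut(G'_i),
  which gives both statements.
*)

section \<open>Split modules and indecomposable vertex sets\<close>

text \<open>Within W, the graph is the composition (X, A, X - A) o (W - X).\<close>

definition split_module :: "'a set set \<Rightarrow> 'a set \<Rightarrow> 'a set \<Rightarrow> 'a set \<Rightarrow> bool" where
  "split_module E W X A \<longleftrightarrow> A \<subseteq> X \<and> X \<subseteq> W \<and>
     (\<forall>u\<in>A. \<forall>v\<in>A. u \<noteq> v \<longrightarrow> {u, v} \<in> E) \<and> (\<forall>u\<in>X - A. \<forall>v\<in>X - A. {u, v} \<notin> E) \<and>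
     (\<forall>u\<in>X. \<forall>v\<in>W - X. {u, v} \<in> E \<longleftrightarrow> u \<in> A)"

definition indecomposable_on :: "'a set set \<Rightarrow> 'a set \<Rightarrow> bool" where
  "indecomposable_on E H \<longleftrightarrow> (\<forall>X A. split_module E H X A \<longrightarrow> X = {} \<or> X = H)"

lemma split_moduleI:
  assumes "A \<subseteq> X" "X \<subseteq> W" "\<And>u v. u \<in> A \<Longrightarrow> v \<in> A \<Longrightarrow> u \<noteq> v \<Longrightarrow> {u, v} \<in> E"
    "\<And>u v. u \<in> X - A \<Longrightarrow> v \<in> X - A \<Longrightarrow> {u, v} \<notin> E"
    "\<And>u v. u \<in> X \<Longrightarrow> v \<in> W - X \<Longrightarrow> {u, v} \<in> E \<longleftrightarrow> u \<in> A"
  shows "split_module E W X A"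
  using assms unfolding split_module_def by blast

lemma split_moduleD:
  assumes "split_module E W X A"
  shows "A \<subseteq> X" "X \<subseteq> W" "\<And>u v. u \<in> A \<Longrightarrow> v \<in> A \<Longrightarrow> u \<noteq> v \<Longrightarrow> {u, v} \<in> E"
    "\<And>u v. u \<in> X - A \<Longrightarrow> v \<in> X - A \<Longrightarrow> {u, v} \<notin> E"
    "\<And>u v. u \<in> X \<Longrightarrow> v \<in> W - X \<Longrightarrow> {u, v} \<in> E \<longleftrightarrow> u \<in> A"
  using assms unfolding split_module_def by blast+

lemma indecomposable_onD: "indecomposable_on E H \<Longrightarrow> split_module E H X A \<Longrightarrow> X = {} \<or> X = H"
  unfolding indecomposable_on_def by blast

lemma card_ge_2_ex_other: "2 \<le> card H \<Longrightarrow> \<exists>y\<in>H. y \<noteq> x"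
  using card_mono[of "{x}" H] by force

lemma split_module_restrict:
  assumes "split_module E W X A" "H \<subseteq> W"
  shows "split_module E H (X \<inter> H) (A \<inter> H)"
  using split_moduleD[OF assms(1)] assms(2) by (intro split_moduleI) blast+

lemma indecomposable_onI:
  assumes "indecomposable H F" and "\<And>u v. u \<in> H \<Longrightarrow> v \<in> H \<Longrightarrow> {u, v} \<in> F \<longleftrightarrow> {u, v} \<in> E"
  shows "indecomposable_on E H"
  unfolding indecomposable_on_def
proof (intro allI impI)
  fix X A assume sm: "split_module E H X A"
  note X = split_moduleD[OF sm]
  have KS: "KS_partition X (induced_edges F X) A (X - A)"
    unfolding KS_partition_def induced_edges_def
  proof (intro conjI ballI impI)
    fix u v
    show "u \<in> A \<Longrightarrow> v \<in> A \<Longrightarrow> u \<noteq> v \<Longrightarrow> {u, v} \<in> {e \<in> F. e \<subseteq> X}"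
      using X(1) X(2) X(3)[of u v] assms(2)[of u v] by blast
    show "u \<in> X - A \<Longrightarrow> v \<in> X - A \<Longrightarrow> {u, v} \<notin> {e \<in> F. e \<subseteq> X}"
      using X(2) X(4)[of u v] assms(2)[of u v] by blast
  qed (use X(1) in blast)+
  have cross: "\<forall>u\<in>X. \<forall>v\<in>H - X. {u, v} \<in> F \<longleftrightarrow> u \<in> A"
    using X(2,5) assms(2) by blast
  show "X = {} \<or> X = H"
  proof (rule ccontr)
    assume "\<not> (X = {} \<or> X = H)"
    then have "X \<union> (H - X) = H \<and> X \<inter> (H - X) = {} \<and> X \<noteq> {} \<and> H - X \<noteq> {} \<and>
        KS_partition X (induced_edges F X) A (X - A) \<and> (\<forall>u\<in>X. \<forall>v\<in>H - X. {u, v} \<in> F \<longleftrightarrow> u \<in> A)"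
      using X(2) KS cross by blast
    then show False using assms(1) unfolding indecomposable_def by blast
  qed
qed

lemma indecomposable_on_non_neighbour:
  assumes "indecomposable_on E H" "2 \<le> card H" "x \<in> H"
  obtains y where "y \<in> H" "y \<noteq> x" "{x, y} \<notin> E"
proof (rule ccontr)
  assume "\<not> thesis"
  with that have "\<And>y. y \<in> H \<Longrightarrow> y \<noteq> x \<Longrightarrow> {x, y} \<in> E" by blast
  with assms(3) have "split_module E H {x} {x}" by (intro split_moduleI) auto
  moreover have "H \<noteq> {x}" using assms(2) by auto
  ultimately show False using indecomposable_onD[OF assms(1)] by blast
qed

lemma indecomposable_on_neighbour:
  assumes "indecomposable_on E H" "2 \<le> card H" "x \<in> H"
  obtains y where "y \<in> H" "{x, y} \<in> E"
proof (rule ccontr)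
  assume "\<not> thesis"
  with that have isolated: "\<And>y. y \<in> H \<Longrightarrow> {x, y} \<notin> E" by blast
  with assms(3) have "split_module E H {x} {}" using isolated[of x] by (intro split_moduleI) auto
  moreover have "H \<noteq> {x}" using assms(2) by auto
  ultimately show False using indecomposable_onD[OF assms(1)] by blast
qed

lemma split_partition_nontrivial:
  assumes "indecomposable_on E H" "2 \<le> card H" "split_module E H H A"
  shows "A \<noteq> {}" "A \<noteq> H"
proof -
  obtain x where x: "x \<in> H" using card_ge_2_ex_other[OF assms(2)] by blast
  show "A \<noteq> {}"
  proof
    assume "A = {}"
    obtain y where "y \<in> H" "{x, y} \<in> E" using indecomposable_on_neighbour[OF assms(1,2) x] .
    with split_moduleD(4)[OF assms(3)] \<open>A = {}\<close> x show False by blast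
  qed
  show "A \<noteq> H"
  proof
    assume "A = H"
    obtain y where "y \<in> H" "y \<noteq> x" "{x, y} \<notin> E" using indecomposable_on_non_neighbour[OF assms(1,2) x] .
    with split_moduleD(3)[OF assms(3)] \<open>A = H\<close> x show False by blast
  qed
qed

lemma split_module_inter_indecomposable:
  assumes "indecomposable_on E H" "H \<subseteq> W" "split_module E W X A"
  shows "X \<inter> H = {} \<or> H \<subseteq> X"
  using indecomposable_onD[OF assms(1) split_module_restrict[OF assms(3,2)]] by blast

lemma split_module_Diff_clique_vertex:
  assumes A: "split_module E H H A" and a: "a \<in> A" and no_neighbour: "\<forall>b\<in>H - A. {a, b} \<notin> E"
  shows "split_module E H (H - {a}) (A - {a})"
proof (rule split_moduleI)
  note A = split_moduleD[OF A]
  fix u v assume "u \<in> H - {a}" "v \<in> H - (H - {a})"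
  then show "{u, v} \<in> E \<longleftrightarrow> u \<in> A - {a}"
    using no_neighbour A(3)[of u a] a by (auto simp: insert_commute)
qed (use split_moduleD[OF A] in auto)

lemma split_module_Diff_independent_vertex:
  assumes A: "split_module E H H A" and A': "split_module E H H A'"
    and a: "a \<in> A" "a \<notin> A'" and b: "b \<in> H - A" "{a, b} \<in> E"
  shows "split_module E H (H - {b}) A"
proof (rule split_moduleI)
  note AH = split_moduleD(1)[OF A] and clique = split_moduleD(3)[OF A]
    and indep = split_moduleD(4)[OF A]
  note clique' = split_moduleD(3)[OF A'] and indep' = split_moduleD(4)[OF A']
  have "b \<in> A'" using indep'[of a b] a AH b by blast
  have moved: "u \<in> A'" if "u \<in> A" "u \<noteq> a" for u
    using clique[of u a] indep'[of u a] that a AH by blast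
  fix u v assume u: "u \<in> H - {b}" and "v \<in> H - (H - {b})"
  then have "v = b" by blast
  show "{u, v} \<in> E \<longleftrightarrow> u \<in> A"
  proof (cases "u \<in> A")
    case True
    show ?thesis
    proof (cases "u = a")
      case False
      with \<open>u \<in> A\<close> have "u \<in> A'" by (rule moved)
      with clique' \<open>b \<in> A'\<close> u \<open>u \<in> A\<close> \<open>v = b\<close> show ?thesis by blast
    qed (use a b \<open>v = b\<close> in simp)
  next
    case False
    with indep[of u b] u b \<open>v = b\<close> show ?thesis by blast
  qed
qed (use split_moduleD[OF A] b in auto)

lemma split_partition_subset:
  assumes ind: "indecomposable_on E H" and card: "2 \<le> card H"
    and A: "split_module E H H A" and A': "split_module E H H A'"
  shows "A \<subseteq> A'"
proof
  fix a assume a: "a \<in> A"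
  show "a \<in> A'"
  proof (rule ccontr)
    assume a': "a \<notin> A'"
    have aH: "a \<in> H" using split_moduleD(1)[OF A] a by blast
    show False
    proof (cases "\<exists>b\<in>H - A. {a, b} \<in> E")
      case False
      then have "split_module E H (H - {a}) (A - {a})" using split_module_Diff_clique_vertex[OF A a] by blast
      moreover obtain y where "y \<in> H" "y \<noteq> a" using card_ge_2_ex_other[OF card] by blast
      ultimately show False using indecomposable_onD[OF ind] aH by blast
    next
      case True
      then obtain b where b: "b \<in> H - A" "{a, b} \<in> E" by blast
      then have "split_module E H (H - {b}) A" using split_module_Diff_independent_vertex[OF A A' a a'] by blast
      then show False using indecomposable_onD[OF ind] a aH b by blast
    qed
  qed
qed

lemma split_partition_unique:
  assumes "indecomposable_on E H" "2 \<le> card H" "split_module E H H A" "split_module E H H A'"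
  shows "A = A'"
  using split_partition_subset[OF assms] split_partition_subset[OF assms(1,2,4,3)] by blast

section \<open>Automorphisms\<close>

lemma automorphismD:
  assumes "automorphism W E f"
  shows "bij_betw f W W" "inj_on f W" "f ` W = W" "\<And>x. x \<in> W \<Longrightarrow> f x \<in> W"
    "\<And>u v. u \<in> W \<Longrightarrow> v \<in> W \<Longrightarrow> {f u, f v} \<in> E \<longleftrightarrow> {u, v} \<in> E"
  using assms unfolding automorphism_def bij_betw_def by blast+

lemma automorphism_restrict:
  assumes "automorphism V E f" "W \<subseteq> V" "f ` W = W"
  shows "automorphism W E f"
proof -
  have "inj_on f W" using inj_on_subset[OF automorphismD(2)[OF assms(1)] assms(2)] .
  with assms(3) have "bij_betw f W W" unfolding bij_betw_def by blast
  moreover have "\<forall>u\<in>W. \<forall>v\<in>W. {u, v} \<in> E \<longleftrightarrow> {f u, f v} \<in> E"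
    using automorphismD(5)[OF assms(1)] assms(2) by blast
  ultimately show ?thesis unfolding automorphism_def by blast
qed

lemma automorphism_edges_cong:
  assumes "\<And>u v. u \<in> W \<Longrightarrow> v \<in> W \<Longrightarrow> {u, v} \<in> F \<longleftrightarrow> {u, v} \<in> E"
  shows "automorphism W F f \<longleftrightarrow> automorphism W E f"
proof -
  have "(\<forall>u\<in>W. \<forall>v\<in>W. {u, v} \<in> F \<longleftrightarrow> {f u, f v} \<in> F) \<longleftrightarrow> (\<forall>u\<in>W. \<forall>v\<in>W. {u, v} \<in> E \<longleftrightarrow> {f u, f v} \<in> E)"
    if f: "bij_betw f W W"
    using assms bij_betw_apply[OF f] by simp
  then show ?thesis unfolding automorphism_def by blast
qed

lemma split_module_image:
  assumes f: "automorphism W E f" and X: "split_module E W X A"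
  shows "split_module E W (f ` X) (f ` A)"
proof -
  note f = automorphismD[OF f] and X = split_moduleD[OF X]
  have AW: "A \<subseteq> W" and XW: "X \<subseteq> W" using X(1,2) by blast+
  have diff: "f ` (X - A) = f ` X - f ` A"
    by (rule inj_on_image_set_diff[OF f(2)]) (use XW AW in blast)+
  have out: "f ` (W - X) = W - f ` X"
    using inj_on_image_set_diff[OF f(2), of W X] XW f(3) by simp
  show ?thesis
  proof (rule split_moduleI)
    show "f ` A \<subseteq> f ` X" using X(1) by (rule image_mono)
    show "f ` X \<subseteq> W" using image_mono[OF XW, of f] f(3) by simp
  next
    fix u v assume "u \<in> f ` A" "v \<in> f ` A" "u \<noteq> v"
    then obtain a b where "a \<in> A" "b \<in> A" "u = f a" "v = f b" "a \<noteq> b" by auto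
    with X(3)[of a b] f(5)[of a b] AW show "{u, v} \<in> E" by auto
  next
    fix u v assume "u \<in> f ` X - f ` A" "v \<in> f ` X - f ` A"
    then obtain a b where "a \<in> X - A" "b \<in> X - A" "u = f a" "v = f b" unfolding diff[symmetric] by auto
    with X(4)[of a b] f(5)[of a b] XW show "{u, v} \<notin> E" by auto
  next
    fix u v assume "u \<in> f ` X" "v \<in> W - f ` X"
    then obtain a b where a: "a \<in> X" "u = f a" and b: "b \<in> W - X" "v = f b"
      unfolding out[symmetric] by auto
    have "{u, v} \<in> E \<longleftrightarrow> {a, b} \<in> E" using a b f(5)[of a b] XW by auto
    also have "\<dots> \<longleftrightarrow> a \<in> A" using X(5)[of a b] a b by simp
    also have "\<dots> \<longleftrightarrow> u \<in> f ` A" using inj_on_image_mem_iff[OF f(2) _ AW, of a] a XW by auto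
    finally show "{u, v} \<in> E \<longleftrightarrow> u \<in> f ` A" .
  qed
qed

lemma automorphism_image_indecomposable_module:
  assumes f: "automorphism W E f" and H: "indecomposable_on E H" "2 \<le> card H" "split_module E W H A"
  shows "f ` H = H"
proof -
  have HW: "H \<subseteq> W" and AH: "A \<subseteq> H" using split_moduleD(2,1)[OF H(3)] .
  have fH: "split_module E W (f ` H) (f ` A)" using split_module_image[OF f H(3)] .
  have "H \<subseteq> f ` H"
  proof (rule ccontr)
    assume "\<not> H \<subseteq> f ` H"
    then have disj: "f ` H \<inter> H = {}" using split_module_inter_indecomposable[OF H(1) HW fH] by blast
    \<comment> \<open>then a vertex of f ` H would see the two sides of the nontrivial partition of H differently\<close>
    have "split_module E H H A" using split_module_restrict[OF H(3) HW] AH by (simp add: Int_absorb2)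
    then obtain a b where ab: "a \<in> A" "b \<in> H - A"
      using split_partition_nontrivial[OF H(1,2)] AH by blast
    obtain y where "y \<in> H" using card_ge_2_ex_other[OF H(2)] by blast
    then have x: "f y \<in> f ` H" "f y \<in> W - H" using disj automorphismD(4)[OF f] HW by blast+
    have "{a, f y} \<in> E" "{b, f y} \<notin> E"
      using split_moduleD(5)[OF H(3), of a "f y"] split_moduleD(5)[OF H(3), of b "f y"] ab x(2) AH
      by blast+
    moreover have "a \<in> W - f ` H" "b \<in> W - f ` H" using ab disj HW AH by blast+
    then have "{f y, a} \<in> E \<longleftrightarrow> {f y, b} \<in> E" using split_moduleD(5)[OF fH x(1)] by blast
    ultimately show False by (simp add: insert_commute)
  qed
  moreover have "finite H" using H(2) by (intro card_ge_0_finite) simp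
  moreover have "card (f ` H) = card H"
    using card_image[OF inj_on_subset[OF automorphismD(2)[OF f] HW]] .
  ultimately show ?thesis using card_subset_eq[of "f ` H" H] by simp
qed

definition universal_vertices :: "'a set set \<Rightarrow> 'a set \<Rightarrow> 'a set" where
  "universal_vertices E W = {x \<in> W. \<forall>y\<in>W. y \<noteq> x \<longrightarrow> {x, y} \<in> E}"

definition isolated_vertices :: "'a set set \<Rightarrow> 'a set \<Rightarrow> 'a set" where
  "isolated_vertices E W = {x \<in> W. \<forall>y\<in>W. {x, y} \<notin> E}"

lemma automorphism_image_invariant:
  assumes f: "automorphism W E f" and P: "\<And>x. x \<in> W \<Longrightarrow> P (f x) \<longleftrightarrow> P x"
  shows "f ` {x \<in> W. P x} = {x \<in> W. P x}"
proof
  note f = automorphismD[OF f]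
  show "f ` {x \<in> W. P x} \<subseteq> {x \<in> W. P x}" using f(4) P by auto
  show "{x \<in> W. P x} \<subseteq> f ` {x \<in> W. P x}"
  proof
    fix y assume y: "y \<in> {x \<in> W. P x}"
    then obtain x where "x \<in> W" "y = f x" using f(3) by blast
    with y P show "y \<in> f ` {x \<in> W. P x}" by auto
  qed
qed

lemma automorphism_image_universal_vertices:
  assumes "automorphism W E f"
  shows "f ` universal_vertices E W = universal_vertices E W"
  unfolding universal_vertices_def
proof (rule automorphism_image_invariant[OF assms])
  note f = automorphismD[OF assms]
  fix x assume x: "x \<in> W"
  have "(\<forall>y\<in>W. y \<noteq> f x \<longrightarrow> {f x, y} \<in> E) \<longleftrightarrow> (\<forall>z\<in>W. f z \<noteq> f x \<longrightarrow> {f x, f z} \<in> E)"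
    by (rule bij_betw_ball[OF f(1)])
  also have "\<dots> \<longleftrightarrow> (\<forall>z\<in>W. z \<noteq> x \<longrightarrow> {x, z} \<in> E)"
    using f(5) x inj_on_eq_iff[OF f(2) _ x] by auto
  finally show "(\<forall>y\<in>W. y \<noteq> f x \<longrightarrow> {f x, y} \<in> E) \<longleftrightarrow> (\<forall>y\<in>W. y \<noteq> x \<longrightarrow> {x, y} \<in> E)" .
qed

lemma automorphism_image_isolated_vertices:
  assumes "automorphism W E f"
  shows "f ` isolated_vertices E W = isolated_vertices E W"
  unfolding isolated_vertices_def
proof (rule automorphism_image_invariant[OF assms])
  note f = automorphismD[OF assms]
  fix x assume x: "x \<in> W"
  have "(\<forall>y\<in>W. {f x, y} \<notin> E) \<longleftrightarrow> (\<forall>z\<in>W. {f x, f z} \<notin> E)"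
    by (rule bij_betw_ball[OF f(1)])
  also have "\<dots> \<longleftrightarrow> (\<forall>z\<in>W. {x, z} \<notin> E)"
    using f(5) x by auto
  finally show "(\<forall>y\<in>W. {f x, y} \<notin> E) \<longleftrightarrow> (\<forall>y\<in>W. {x, y} \<notin> E)" .
qed

lemma universal_vertices_Un_universal:
  assumes R: "\<And>x y. x \<in> R \<Longrightarrow> y \<in> L \<union> R \<Longrightarrow> y \<noteq> x \<Longrightarrow> {x, y} \<in> E"
  shows "universal_vertices E (L \<union> R) = R \<union> universal_vertices E L"
proof -
  have "{x, y} \<in> E" if "x \<in> L" "y \<in> R" "y \<noteq> x" for x y
    using R[of y x] that by (simp add: insert_commute)
  with R show ?thesis unfolding universal_vertices_def by auto
qed

lemma isolated_vertices_Un_isolated: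
  assumes R: "\<And>x y. x \<in> R \<Longrightarrow> y \<in> L \<union> R \<Longrightarrow> {x, y} \<notin> E"
  shows "isolated_vertices E (L \<union> R) = R \<union> isolated_vertices E L"
proof -
  have "{x, y} \<notin> E" if "x \<in> L" "y \<in> R" for x y
    using R[of y x] that by (simp add: insert_commute)
  with R show ?thesis unfolding isolated_vertices_def by auto
qed

section \<open>Fixing sets of compositions with invariant parts\<close>

lemma finite_fixing_sets: "finite V \<Longrightarrow> finite {S. fixing_set V E S}"
  by (rule finite_subset[of _ "Pow V"]) (auto simp: fixing_set_def)

lemma Fix_le_card: "finite V \<Longrightarrow> fixing_set V E S \<Longrightarrow> Fix V E \<le> card S"
  unfolding Fix_def using finite_fixing_sets by (intro Min_le) auto

lemma Fix_attained:
  assumes "finite V"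
  obtains S where "fixing_set V E S" "card S = Fix V E"
proof -
  have "fixing_set V E V" unfolding fixing_set_def by blast
  then have "Fix V E \<in> card ` {S. fixing_set V E S}"
    unfolding Fix_def using finite_fixing_sets[OF assms] by (intro Min_in) auto
  then obtain S where "fixing_set V E S" "Fix V E = card S" by blast
  with that show ?thesis by simp
qed

locale aut_stable_composition =
  fixes V :: "'a set" and E :: "'a set set" and l :: nat
    and VV :: "nat \<Rightarrow> 'a set" and EE :: "nat \<Rightarrow> 'a set set" and AA :: "nat \<Rightarrow> 'a set"
  assumes finite_vertices: "finite V"
    and parts_disjoint: "\<And>i j. i \<le> l \<Longrightarrow> j \<le> l \<Longrightarrow> i \<noteq> j \<Longrightarrow> VV i \<inter> VV j = {}"
    and vertices_eq: "V = (\<Union>i\<le>l. VV i)"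
    and edge_within_iff: "\<And>i u v. i \<le> l \<Longrightarrow> u \<in> VV i \<Longrightarrow> v \<in> VV i \<Longrightarrow> {u, v} \<in> EE i \<longleftrightarrow> {u, v} \<in> E"
    and edge_across_iff: "\<And>i j u v. i \<le> l \<Longrightarrow> j < i \<Longrightarrow> u \<in> VV i \<Longrightarrow> v \<in> VV j \<Longrightarrow> {u, v} \<in> E \<longleftrightarrow> u \<in> AA i"
    and automorphism_part_clique_iff: "\<And>i h u. 1 \<le> i \<Longrightarrow> i \<le> l \<Longrightarrow> automorphism (VV i) (EE i) h \<Longrightarrow>
       u \<in> VV i \<Longrightarrow> h u \<in> AA i \<longleftrightarrow> u \<in> AA i"
    and automorphism_image_part: "\<And>f i. automorphism V E f \<Longrightarrow> i \<le> l \<Longrightarrow> f ` VV i = VV i"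
begin

lemma part_subset: "i \<le> l \<Longrightarrow> VV i \<subseteq> V"
  using vertices_eq by blast

lemma automorphism_part_iff: "i \<le> l \<Longrightarrow> automorphism (VV i) (EE i) h \<longleftrightarrow> automorphism (VV i) E h"
  using edge_within_iff by (intro automorphism_edges_cong) blast

lemma automorphism_part_cross_edge_iff:
  assumes i: "i \<le> l" and h: "automorphism (VV i) (EE i) h" and u: "u \<in> VV i" and v: "v \<in> V - VV i"
  shows "{h u, v} \<in> E \<longleftrightarrow> {u, v} \<in> E"
proof -
  have hu: "h u \<in> VV i" using automorphismD(4)[OF h u] .
  obtain j where j: "j \<le> l" "v \<in> VV j" "j \<noteq> i" using v vertices_eq by blast
  then consider "j < i" | "i < j" by linarith
  then show ?thesis
  proof cases
    case 1
    then show ?thesis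
      using edge_across_iff[OF i 1 u j(2)] edge_across_iff[OF i 1 hu j(2)]
        automorphism_part_clique_iff[OF _ i h u] by simp
  next
    case 2
    then show ?thesis
      using edge_across_iff[OF j(1) 2 j(2) u] edge_across_iff[OF j(1) 2 j(2) hu]
      by (simp add: insert_commute)
  qed
qed

lemma automorphism_extend_part:
  assumes i: "i \<le> l" and h: "automorphism (VV i) (EE i) h"
  shows "automorphism V E (\<lambda>x. if x \<in> VV i then h x else x)" (is "automorphism V E ?f")
proof -
  note h' = automorphismD[OF h[unfolded automorphism_part_iff[OF i]]]
  have "bij_betw ?f (VV i \<union> (V - VV i)) (VV i \<union> (V - VV i))"
    using h'(1) by (intro bij_betw_combine) (auto simp: bij_betw_def inj_on_def cong: image_cong)
  then have "bij_betw ?f V V" using part_subset[OF i] by (simp add: Un_absorb1)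
  moreover have "{?f u, ?f v} \<in> E \<longleftrightarrow> {u, v} \<in> E" if "u \<in> V" "v \<in> V" for u v
    using that h'(5)[of u v] automorphism_part_cross_edge_iff[OF i h, of u v]
      automorphism_part_cross_edge_iff[OF i h, of v u] by (auto simp: insert_commute)
  ultimately show ?thesis unfolding automorphism_def by auto
qed

lemma automorphism_restrict_part:
  assumes "automorphism V E f" "i \<le> l"
  shows "automorphism (VV i) (EE i) f"
  using automorphism_restrict[OF assms(1) part_subset automorphism_image_part] assms
    automorphism_part_iff by blast

theorem fixing_set_iff_parts:
  assumes "S \<subseteq> V"
  shows "fixing_set V E S \<longleftrightarrow> (\<forall>i\<le>l. fixing_set (VV i) (EE i) (S \<inter> VV i))"
proof
  assume S: "fixing_set V E S"
  show "\<forall>i\<le>l. fixing_set (VV i) (EE i) (S \<inter> VV i)"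
  proof (intro allI impI)
    fix i assume i: "i \<le> l"
    show "fixing_set (VV i) (EE i) (S \<inter> VV i)"
      unfolding fixing_set_def
    proof (intro conjI allI impI)
      fix h assume h: "automorphism (VV i) (EE i) h \<and> (\<forall>s\<in>S \<inter> VV i. h s = s)"
      let ?f = "\<lambda>x. if x \<in> VV i then h x else x"
      have "automorphism V E ?f" using automorphism_extend_part[OF i] h by blast
      moreover have "\<forall>s\<in>S. ?f s = s" using h by auto
      ultimately have fixed: "\<forall>v\<in>V. ?f v = v" using S unfolding fixing_set_def by blast
      show "\<forall>v\<in>VV i. h v = v"
      proof
        fix v assume "v \<in> VV i"
        with fixed part_subset[OF i] have "?f v = v" by blast
        with \<open>v \<in> VV i\<close> show "h v = v" by simp
      qed
    qed blast
  qed
next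
  assume parts: "\<forall>i\<le>l. fixing_set (VV i) (EE i) (S \<inter> VV i)"
  show "fixing_set V E S"
    unfolding fixing_set_def
  proof (intro conjI allI impI ballI)
    fix f v assume f: "automorphism V E f \<and> (\<forall>s\<in>S. f s = s)" and "v \<in> V"
    then obtain i where "i \<le> l" "v \<in> VV i" using vertices_eq by blast
    with f parts automorphism_restrict_part show "f v = v" unfolding fixing_set_def by blast
  qed (rule assms)
qed

lemma card_eq_sum_parts:
  assumes "T \<subseteq> V"
  shows "card T = (\<Sum>i\<le>l. card (T \<inter> VV i))"
proof -
  have "T = (\<Union>i\<le>l. T \<inter> VV i)" using assms vertices_eq by blast
  also have "card \<dots> = (\<Sum>i\<le>l. card (T \<inter> VV i))"
    using parts_disjoint finite_subset[OF part_subset finite_vertices]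
    by (intro card_UN_disjoint) auto
  finally show ?thesis .
qed

theorem Fix_eq_sum_parts: "Fix V E = (\<Sum>i\<le>l. Fix (VV i) (EE i))"
proof (rule antisym)
  have finite_part: "finite (VV i)" if "i \<le> l" for i
    using finite_subset[OF part_subset[OF that] finite_vertices] .
  have "\<forall>i\<in>{..l}. \<exists>S. fixing_set (VV i) (EE i) S \<and> card S = Fix (VV i) (EE i)"
    using Fix_attained[OF finite_part] by (metis atMost_iff)
  then obtain S where S: "\<And>i. i \<le> l \<Longrightarrow> fixing_set (VV i) (EE i) (S i) \<and> card (S i) = Fix (VV i) (EE i)"
    by (metis atMost_iff)
  have S_part: "S i \<subseteq> VV i" if "i \<le> l" for i using S[OF that] unfolding fixing_set_def by blast
  define T where "T = (\<Union>i\<le>l. S i)"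
  have T_sub: "T \<subseteq> V" unfolding T_def using S_part part_subset by blast
  have T_part: "T \<inter> VV i = S i" if "i \<le> l" for i
    unfolding T_def using S_part parts_disjoint that by blast
  have "fixing_set V E T" using fixing_set_iff_parts[OF T_sub] T_part S by simp
  then have "Fix V E \<le> card T" by (rule Fix_le_card[OF finite_vertices])
  also have "\<dots> = (\<Sum>i\<le>l. Fix (VV i) (EE i))" using card_eq_sum_parts[OF T_sub] T_part S by simp
  finally show "Fix V E \<le> (\<Sum>i\<le>l. Fix (VV i) (EE i))" .
next
  obtain T where T: "fixing_set V E T" "card T = Fix V E" using Fix_attained[OF finite_vertices] .
  then have T_sub: "T \<subseteq> V" unfolding fixing_set_def by blast
  have "(\<Sum>i\<le>l. Fix (VV i) (EE i)) \<le> (\<Sum>i\<le>l. card (T \<inter> VV i))"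
  proof (rule sum_mono)
    fix i assume "i \<in> {..l}"
    then show "Fix (VV i) (EE i) \<le> card (T \<inter> VV i)"
      using T(1) fixing_set_iff_parts[OF T_sub] finite_subset[OF part_subset finite_vertices]
      by (intro Fix_le_card) auto
  qed
  also have "\<dots> = Fix V E" using card_eq_sum_parts[OF T_sub] T(2) by simp
  finally show "(\<Sum>i\<le>l. Fix (VV i) (EE i)) \<le> Fix V E" .
qed

end

section \<open>The canonical decomposition\<close>

lemma UN_atMost_split:
  fixes i0 i1 :: nat
  assumes "i0 \<le> i1"
  shows "(\<Union>i\<le>i1. A i) = (\<Union>i\<le>i0 - 1. A i) \<union> (\<Union>i\<in>{i0..i1}. A i)"
proof -
  have "{..i1} = {..i0 - 1} \<union> {i0..i1}" using assms by auto
  then show ?thesis by simp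
qed

locale canonical_decomposition =
  fixes V :: "'a set" and E :: "'a set set" and k :: nat and VV :: "nat \<Rightarrow> 'a set"
    and EE :: "nat \<Rightarrow> 'a set set" and AA BB :: "nat \<Rightarrow> 'a set"
  assumes graph: "graph V E"
    and components_disjoint: "\<And>i j. i \<le> k \<Longrightarrow> j \<le> k \<Longrightarrow> i \<noteq> j \<Longrightarrow> VV i \<inter> VV j = {}"
    and component_graph: "\<And>i. i \<le> k \<Longrightarrow> graph (VV i) (EE i)"
    and component_nonempty: "\<And>i. 1 \<le> i \<Longrightarrow> i \<le> k \<Longrightarrow> VV i \<noteq> {}"
    and component_KS: "\<And>i. 1 \<le> i \<Longrightarrow> i \<le> k \<Longrightarrow> KS_partition (VV i) (EE i) (AA i) (BB i)"
    and base_nonempty: "1 \<le> k \<Longrightarrow> VV 0 \<noteq> {}"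
    and component_indecomposable: "\<And>i. i \<le> k \<Longrightarrow> indecomposable (VV i) (EE i)"
    and vertices_eq: "V = (\<Union>i\<le>k. VV i)"
    and edges_eq: "E = (\<Union>i\<le>k. EE i) \<union> {{u, v} | u v. \<exists>i j. j < i \<and> i \<le> k \<and> u \<in> AA i \<and> v \<in> VV j}"

lemma canonical_decompositionI:
  "graph V E \<Longrightarrow> canon_decomp V E k VV EE AA BB \<Longrightarrow> canonical_decomposition V E k VV EE AA BB"
  unfolding canon_decomp_def canonical_decomposition_def by simp

context canonical_decomposition
begin

lemma no_loop: "{u} \<notin> E"
proof
  assume "{u} \<in> E"
  then obtain a b where "a \<noteq> b" "{u} = {a, b}" using graph unfolding graph_def by blast
  then show False by (simp add: doubleton_eq_iff)
qed

lemma component_unique: "x \<in> VV i \<Longrightarrow> x \<in> VV j \<Longrightarrow> i \<le> k \<Longrightarrow> j \<le> k \<Longrightarrow> i = j"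
  using components_disjoint by blast

lemma component_edge_subset:
  assumes "i \<le> k" "e \<in> EE i"
  shows "e \<subseteq> VV i"
proof -
  obtain u v where "u \<in> VV i" "v \<in> VV i" "e = {u, v}"
    using component_graph[OF assms(1)] assms(2) unfolding graph_def by blast
  then show ?thesis by simp
qed

lemma clique_subset: "1 \<le> i \<Longrightarrow> i \<le> k \<Longrightarrow> AA i \<subseteq> VV i"
  using component_KS unfolding KS_partition_def by blast

lemma edgeE:
  assumes "e \<in> E"
  obtains (within) i where "i \<le> k" "e \<in> EE i"
    | (across) a b i j where "e = {a, b}" "j < i" "i \<le> k" "a \<in> AA i" "b \<in> VV j"
  using assms unfolding edges_eq by blast

lemma edge_within_component_iff:
  assumes i: "i \<le> k" and uv: "u \<in> VV i" "v \<in> VV i"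
  shows "{u, v} \<in> E \<longleftrightarrow> {u, v} \<in> EE i"
proof
  assume "{u, v} \<in> E"
  then show "{u, v} \<in> EE i"
  proof (cases rule: edgeE)
    case (within i')
    then have "u \<in> VV i'" using component_edge_subset by blast
    with within uv i have "i' = i" using component_unique by blast
    with within show ?thesis by simp
  next
    case (across a b i' j)
    then have "a \<in> VV i'" "a \<in> VV i" "b \<in> VV j" "b \<in> VV i"
      using clique_subset[of i'] uv by (auto simp: doubleton_eq_iff)
    then have "i' = i" "j = i" using component_unique across i by simp_all
    with across show ?thesis by simp
  qed
qed (use i in \<open>auto simp: edges_eq\<close>)

lemma edge_across_components_iff:
  assumes i: "i \<le> k" and ji: "j < i" and u: "u \<in> VV i" and v: "v \<in> VV j"
  shows "{u, v} \<in> E \<longleftrightarrow> u \<in> AA i"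
proof
  assume "{u, v} \<in> E"
  then show "u \<in> AA i"
  proof (cases rule: edgeE)
    case (within i')
    then have "u \<in> VV i'" "v \<in> VV i'" using component_edge_subset by blast+
    with within u v i ji have "i' = i" "i' = j" using component_unique by simp_all
    with ji show ?thesis by simp
  next
    case (across a b i' j')
    then have a: "a \<in> VV i'" using clique_subset[of i'] by auto
    have "u \<noteq> v" using u v ji i components_disjoint[of i j] by auto
    with across(1) consider "a = u" | "a = v" "b = u" by (auto simp: doubleton_eq_iff)
    then show ?thesis
    proof cases
      case 1
      with a u across i have "i' = i" using component_unique by simp
      with 1 across show ?thesis by simp
    next
      case 2
      with a v across i ji u have "i' = j" "j' = i" using component_unique by simp_all
      with across ji show ?thesis by simp
    qed
  qed
qed (use assms in \<open>auto simp: edges_eq\<close>)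

lemma component_clique:
  assumes "1 \<le> i" "i \<le> k" "u \<in> AA i" "v \<in> AA i" "u \<noteq> v"
  shows "{u, v} \<in> E"
proof -
  have "{u, v} \<in> EE i" using component_KS[OF assms(1,2)] assms(3-) unfolding KS_partition_def by blast
  with clique_subset[OF assms(1,2)] assms(3,4) show ?thesis
    using edge_within_component_iff[OF assms(2), of u v] by blast
qed

lemma component_independent:
  assumes "1 \<le> i" "i \<le> k" "u \<in> VV i - AA i" "v \<in> VV i - AA i"
  shows "{u, v} \<notin> E"
proof -
  have "{u, v} \<notin> EE i" using component_KS[OF assms(1,2)] assms(3-) unfolding KS_partition_def by blast
  with assms(3,4) show ?thesis using edge_within_component_iff[OF assms(2), of u v] by blast
qed

lemma component_split_module:
  assumes i: "1 \<le> i" "i \<le> k" and W: "VV i \<subseteq> W" "W \<subseteq> (\<Union>j\<le>i. VV j)"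
  shows "split_module E W (VV i) (AA i)"
proof (rule split_moduleI)
  show "AA i \<subseteq> VV i" using clique_subset[OF i] .
  show "VV i \<subseteq> W" using W(1) .
  show "{u, v} \<in> E" if "u \<in> AA i" "v \<in> AA i" "u \<noteq> v" for u v
    using component_clique[OF i that] .
  show "{u, v} \<notin> E" if "u \<in> VV i - AA i" "v \<in> VV i - AA i" for u v
    using component_independent[OF i that] .
  fix u v assume u: "u \<in> VV i" and v: "v \<in> W - VV i"
  then obtain j where "j < i" "v \<in> VV j" using W(2) le_neq_implies_less by blast
  then show "{u, v} \<in> E \<longleftrightarrow> u \<in> AA i" using edge_across_components_iff[OF i(2) _ u] by blast
qed

lemma component_indecomposable_on:
  assumes "i \<le> k"
  shows "indecomposable_on E (VV i)"
proof (rule indecomposable_onI[OF component_indecomposable[OF assms]])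
  fix u v assume "u \<in> VV i" "v \<in> VV i"
  then show "{u, v} \<in> EE i \<longleftrightarrow> {u, v} \<in> E" using edge_within_component_iff[OF assms] by simp
qed

lemma component_card_ge_2:
  assumes "i \<le> k" "VV i \<noteq> {}" "card (VV i) \<noteq> 1"
  shows "2 \<le> card (VV i)"
proof -
  have "finite (VV i)" using component_graph[OF assms(1)] unfolding graph_def by blast
  with assms(2) have "card (VV i) \<noteq> 0" by simp
  with assms(3) show ?thesis by linarith
qed

lemma component_partition_nontrivial:
  assumes "1 \<le> j" "j \<le> k" "card (VV j) \<noteq> 1"
  shows "AA j \<noteq> {}" "AA j \<noteq> VV j"
proof -
  have "split_module E (VV j) (VV j) (AA j)" using component_split_module[OF assms(1,2)] by blast
  then show "AA j \<noteq> {}" "AA j \<noteq> VV j"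
    using split_partition_nontrivial[OF component_indecomposable_on[OF assms(2)]
        component_card_ge_2[OF assms(2) component_nonempty[OF assms(1,2)] assms(3)]] by blast+
qed

lemma clique_run_adjacent:
  assumes run: "1 \<le> i0" "i1 \<le> k" "\<And>i. i0 \<le> i \<Longrightarrow> i \<le> i1 \<Longrightarrow> AA i = VV i"
    and x: "x \<in> VV i" "i0 \<le> i" "i \<le> i1" and y: "y \<in> VV j" "j \<le> i1" "y \<noteq> x"
  shows "{x, y} \<in> E"
proof -
  have i: "1 \<le> i" "i \<le> k" and AA_i: "AA i = VV i" using run x by auto
  consider "j = i" | "j < i" | "i < j" by linarith
  then show ?thesis
  proof cases
    case 1
    then show ?thesis using component_clique[OF i] AA_i x y by auto
  next
    case 2
    then show ?thesis using edge_across_components_iff[OF i(2) 2 x(1) y(1)] AA_i x(1) by simp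
  next
    case 3
    then have "AA j = VV j" using run(3) x y by simp
    then show ?thesis using edge_across_components_iff[of j i y x] 3 run(2) x y by (simp add: insert_commute)
  qed
qed

lemma independent_run_nonadjacent:
  assumes run: "1 \<le> i0" "i1 \<le> k" "\<And>i. i0 \<le> i \<Longrightarrow> i \<le> i1 \<Longrightarrow> AA i = {}"
    and x: "x \<in> VV i" "i0 \<le> i" "i \<le> i1" and y: "y \<in> VV j" "j \<le> i1"
  shows "{x, y} \<notin> E"
proof -
  have i: "1 \<le> i" "i \<le> k" and AA_i: "AA i = {}" using run x by auto
  consider "j = i" | "j < i" | "i < j" by linarith
  then show ?thesis
  proof cases
    case 1
    then show ?thesis using component_independent[OF i] AA_i x y by auto
  next
    case 2
    then show ?thesis using edge_across_components_iff[OF i(2) 2 x(1) y(1)] AA_i by simp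
  next
    case 3
    then have "AA j = {}" using run(3) x y by simp
    then show ?thesis using edge_across_components_iff[of j i y x] 3 run(2) x y by (simp add: insert_commute)
  qed
qed

lemma universal_vertices_clique_run:
  assumes run: "1 \<le> i0" "i0 \<le> i1" "i1 \<le> k" "\<And>i. i0 \<le> i \<Longrightarrow> i \<le> i1 \<Longrightarrow> AA i = VV i"
  shows "universal_vertices E (\<Union>i\<le>i1. VV i) =
    (\<Union>i\<in>{i0..i1}. VV i) \<union> universal_vertices E (\<Union>i\<le>i0 - 1. VV i)"
  unfolding UN_atMost_split[OF run(2)]
proof (rule universal_vertices_Un_universal)
  fix x y assume "x \<in> (\<Union>i\<in>{i0..i1}. VV i)" "y \<in> (\<Union>i\<le>i0 - 1. VV i) \<union> (\<Union>i\<in>{i0..i1}. VV i)" "y \<noteq> x"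
  then show "{x, y} \<in> E" using clique_run_adjacent[OF run(1,3,4)] run(2) by fastforce
qed

lemma isolated_vertices_independent_run:
  assumes run: "1 \<le> i0" "i0 \<le> i1" "i1 \<le> k" "\<And>i. i0 \<le> i \<Longrightarrow> i \<le> i1 \<Longrightarrow> AA i = {}"
  shows "isolated_vertices E (\<Union>i\<le>i1. VV i) =
    (\<Union>i\<in>{i0..i1}. VV i) \<union> isolated_vertices E (\<Union>i\<le>i0 - 1. VV i)"
  unfolding UN_atMost_split[OF run(2)]
proof (rule isolated_vertices_Un_isolated)
  fix x y assume "x \<in> (\<Union>i\<in>{i0..i1}. VV i)" "y \<in> (\<Union>i\<le>i0 - 1. VV i) \<union> (\<Union>i\<in>{i0..i1}. VV i)"
  then show "{x, y} \<notin> E" using independent_run_nonadjacent[OF run(1,3,4)] run(2) by fastforce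
qed

lemma universal_vertices_below_empty:
  assumes j: "j \<le> k" and not_K1: "\<not> (card (VV j) = 1 \<and> (j = 0 \<or> AA j = VV j))"
  shows "universal_vertices E (\<Union>i\<le>j. VV i) = {}"
proof (rule ccontr)
  assume "universal_vertices E (\<Union>i\<le>j. VV i) \<noteq> {}"
  then obtain x i where x: "x \<in> VV i" "i \<le> j"
    and universal: "\<And>y. y \<in> (\<Union>i\<le>j. VV i) \<Longrightarrow> y \<noteq> x \<Longrightarrow> {x, y} \<in> E"
    unfolding universal_vertices_def by blast
  have ik: "i \<le> k" using x(2) j by simp
  have not_clique: "AA j \<noteq> VV j" if j1: "1 \<le> j"
    using component_partition_nontrivial[OF j1 j] not_K1 j1 by (cases "card (VV j) = 1") auto
  consider "i < j" | "i = j" "card (VV j) \<noteq> 1" | "i = j" "card (VV j) = 1" using x(2) by linarith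
  then show False
  proof cases
    case 1
    then have j1: "1 \<le> j" by simp
    obtain b where b: "b \<in> VV j" "b \<notin> AA j" using not_clique[OF j1] clique_subset[OF j1 j] by blast
    have "{b, x} \<notin> E" using edge_across_components_iff[OF j 1 b(1) x(1)] b(2) by simp
    moreover have "b \<noteq> x" using component_unique[OF x(1) _ ik j] b(1) 1 by blast
    moreover have "b \<in> (\<Union>i\<le>j. VV i)" using b(1) by blast
    ultimately show False using universal[of b] by (simp add: insert_commute)
  next
    case 2
    then obtain y where "y \<in> VV j" "y \<noteq> x" "{x, y} \<notin> E"
      using indecomposable_on_non_neighbour[OF component_indecomposable_on[OF j]]
        component_card_ge_2[OF j] x by blast
    then show False using universal[of y] by blast
  next
    case 3
    \<comment> \<open>G_j is a single vertex of type S_1 above a nonempty G_0\<close>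
    have xj: "x \<in> VV j" using x(1) 3 by simp
    have j1: "1 \<le> j" using not_K1 3 by simp
    obtain z where "VV j = {z}" using card_1_singletonE[OF 3(2)] .
    with xj have "VV j = {x}" by simp
    then have "x \<notin> AA j" using not_clique[OF j1] clique_subset[OF j1 j] by auto
    obtain y where y: "y \<in> VV 0" using base_nonempty j j1 by auto
    have "{x, y} \<notin> E" using edge_across_components_iff[OF j _ xj y] j1 \<open>x \<notin> AA j\<close> by simp
    moreover have "y \<noteq> x" using component_unique[OF xj _ j, of 0] y j1 by auto
    moreover have "y \<in> (\<Union>i\<le>j. VV i)" using y by blast
    ultimately show False using universal by blast
  qed
qed

lemma isolated_vertices_below_empty:
  assumes j: "j \<le> k" and not_S1: "\<not> (card (VV j) = 1 \<and> (j = 0 \<or> AA j = {}))"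
  shows "isolated_vertices E (\<Union>i\<le>j. VV i) = {}"
proof (rule ccontr)
  assume "isolated_vertices E (\<Union>i\<le>j. VV i) \<noteq> {}"
  then obtain x i where x: "x \<in> VV i" "i \<le> j"
    and isolated: "\<And>y. y \<in> (\<Union>i\<le>j. VV i) \<Longrightarrow> {x, y} \<notin> E"
    unfolding isolated_vertices_def by blast
  have not_independent: "AA j \<noteq> {}" if j1: "1 \<le> j"
    using component_partition_nontrivial[OF j1 j] not_S1 j1 by (cases "card (VV j) = 1") auto
  consider "i < j" | "i = j" "card (VV j) \<noteq> 1" | "i = j" "card (VV j) = 1" using x(2) by linarith
  then show False
  proof cases
    case 1
    then have j1: "1 \<le> j" by simp
    obtain a where a: "a \<in> AA j" using not_independent[OF j1] by blast
    then have aj: "a \<in> VV j" using clique_subset[OF j1 j] by blast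
    have "{a, x} \<in> E" using edge_across_components_iff[OF j 1 aj x(1)] a by simp
    moreover have "a \<in> (\<Union>i\<le>j. VV i)" using aj by blast
    ultimately show False using isolated[of a] by (simp add: insert_commute)
  next
    case 2
    then obtain y where "y \<in> VV j" "{x, y} \<in> E"
      using indecomposable_on_neighbour[OF component_indecomposable_on[OF j]]
        component_card_ge_2[OF j] x by blast
    then show False using isolated[of y] by blast
  next
    case 3
    \<comment> \<open>G_j is a single vertex of type K_1 above a nonempty G_0\<close>
    have xj: "x \<in> VV j" using x(1) 3 by simp
    have j1: "1 \<le> j" using not_S1 3 by simp
    obtain z where "VV j = {z}" using card_1_singletonE[OF 3(2)] .
    with xj have "VV j = {x}" by simp
    then have "x \<in> AA j" using not_independent[OF j1] clique_subset[OF j1 j] by auto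
    obtain y where y: "y \<in> VV 0" using base_nonempty j j1 by auto
    have "{x, y} \<in> E" using edge_across_components_iff[OF j _ xj y] j1 \<open>x \<in> AA j\<close> by simp
    moreover have "y \<in> (\<Union>i\<le>j. VV i)" using y by blast
    ultimately show False using isolated by blast
  qed
qed

end

section \<open>The compact canonical decomposition\<close>

locale compact_decomposition = canonical_decomposition +
  fixes l :: nat and VV' :: "nat \<Rightarrow> 'a set" and EE' :: "nat \<Rightarrow> 'a set set"
    and AA' BB' :: "nat \<Rightarrow> 'a set" and g :: "nat \<Rightarrow> nat"
  assumes g_0: "g 0 = 0"
    and g_Suc: "\<And>i. i < k \<Longrightarrow> g (Suc i) = (if merge_next k VV AA i then g i else Suc (g i))"
    and g_k: "g k = l"
    and compact_vertices: "\<And>j. j \<le> l \<Longrightarrow> VV' j = (\<Union>i\<in>{i. i \<le> k \<and> g i = j}. VV i)"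
    and compact_edges: "\<And>i. i \<le> k \<Longrightarrow> EE' (g i) =
      (if card (VV i) = 1 then (if typeK k VV AA i then complete_edges (VV' (g i)) else {}) else EE i)"
    and compact_KS: "\<And>i. 1 \<le> i \<Longrightarrow> i \<le> k \<Longrightarrow> (AA' (g i), BB' (g i)) =
      (if card (VV i) = 1 then (if AA i = VV i then (VV' (g i), {}) else ({}, VV' (g i))) else (AA i, BB i))"

lemma compact_decompositionE:
  assumes "graph V E" "compact_canon_decomp V E l VV' EE' AA' BB'"
  obtains k VV EE AA BB g where "compact_decomposition V E k VV EE AA BB l VV' EE' AA' BB' g"
  using assms(2) unfolding compact_canon_decomp_def
proof (elim exE conjE)
  fix k VV EE AA BB g
  assume "canon_decomp V E k VV EE AA BB"
  then have "canonical_decomposition V E k VV EE AA BB" by (rule canonical_decompositionI[OF assms(1)])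
  moreover assume "g 0 = 0" "\<forall>i<k. g (Suc i) = (if merge_next k VV AA i then g i else Suc (g i))" "g k = l"
    "\<forall>j\<le>l. VV' j = (\<Union>i\<in>{i. i \<le> k \<and> g i = j}. VV i)"
    "\<forall>i\<le>k. EE' (g i) = (if card (VV i) = 1
       then (if typeK k VV AA i then complete_edges (VV' (g i)) else {}) else EE i)"
    "\<forall>i. 1 \<le> i \<and> i \<le> k \<longrightarrow> (AA' (g i), BB' (g i)) = (if card (VV i) = 1
       then (if AA i = VV i then (VV' (g i), {}) else ({}, VV' (g i))) else (AA i, BB i))"
  ultimately have "compact_decomposition V E k VV EE AA BB l VV' EE' AA' BB' g"
    unfolding compact_decomposition_def compact_decomposition_axioms_def by blast
  then show thesis by (rule that)
qed

context compact_decomposition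
begin

lemma g_mono:
  assumes "i \<le> i'" "i' \<le> k"
  shows "g i \<le> g i'"
  using assms(1)
proof (induction rule: dec_induct)
  case (step n)
  then show ?case using g_Suc[of n] assms(2) by simp
qed simp

lemma g_le: "i \<le> k \<Longrightarrow> g i \<le> l"
  using g_mono[of i k] g_k by simp

lemma g_surj:
  assumes "j \<le> l"
  obtains i where "i \<le> k" "g i = j"
proof -
  have "\<exists>i\<le>n. g i = j" if "n \<le> k" "j \<le> g n" for n
    using that
  proof (induction n)
    case (Suc n)
    show ?case
    proof (cases "j = g (Suc n)")
      case False
      then have "j \<le> g n" using Suc.prems g_Suc[of n] by (simp split: if_splits)
      then show ?thesis using Suc by (meson le_SucI Suc_leD)
    qed blast
  qed (simp add: g_0)
  then show ?thesis using that assms g_k by blast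
qed

lemma merge_next_if_same_part:
  assumes "i \<le> t" "t < i'" "i' \<le> k" "g i = g i'"
  shows "merge_next k VV AA t"
proof -
  have "g i \<le> g t" "g t \<le> g (Suc t)" "g (Suc t) \<le> g i'"
    using g_mono[of i t] g_mono[of t "Suc t"] g_mono[of "Suc t" i'] assms by simp_all
  with assms(4) have "g (Suc t) = g t" by linarith
  then show ?thesis using g_Suc[of t] assms(2,3) by (simp split: if_splits)
qed

lemma card_eq_1_if_same_part:
  assumes "i \<le> k" "i' \<le> k" "i \<noteq> i'" "g i = g i'"
  shows "card (VV i) = 1"
proof (cases "i < i'")
  case True
  then show ?thesis using merge_next_if_same_part[of i i i'] assms unfolding merge_next_def by simp
next
  case False
  then have "merge_next k VV AA (i - 1)" using merge_next_if_same_part[of i' "i - 1" i] assms by simp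
  then show ?thesis using False assms(3) unfolding merge_next_def by (simp add: Suc_diff_1)
qed

lemma compact_vertices_iff: "j \<le> l \<Longrightarrow> x \<in> VV' j \<longleftrightarrow> (\<exists>i\<le>k. g i = j \<and> x \<in> VV i)"
  using compact_vertices by auto

lemma compact_parts_disjoint:
  assumes "j \<le> l" "j' \<le> l" "j \<noteq> j'"
  shows "VV' j \<inter> VV' j' = {}"
  using compact_vertices_iff[OF assms(1)] compact_vertices_iff[OF assms(2)] component_unique assms(3)
  by blast

lemma compact_vertices_eq: "V = (\<Union>j\<le>l. VV' j)"
  using vertices_eq compact_vertices_iff g_le by fastforce

lemma compact_part_nontrivial:
  assumes "i \<le> k" "card (VV i) \<noteq> 1"
  shows "VV' (g i) = VV i" "EE' (g i) = EE i"
proof -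
  have "i' = i" if "i' \<le> k" "g i' = g i" for i'
    using card_eq_1_if_same_part[OF assms(1) that(1) _ that(2)[symmetric]] assms(2) by blast
  then show "VV' (g i) = VV i" using compact_vertices_iff[OF g_le[OF assms(1)]] assms(1) by blast
  show "EE' (g i) = EE i" using compact_edges[OF assms(1)] assms(2) by simp
qed

lemma compact_edges_singleton:
  assumes "1 \<le> i" "i \<le> k" "card (VV i) = 1"
  shows "EE' (g i) = (if AA i = VV i then complete_edges (VV' (g i)) else {})"
  using compact_edges[OF assms(2)] assms unfolding typeK_def by simp

lemma compact_clique_eq:
  assumes "1 \<le> i" "i \<le> k"
  shows "AA' (g i) = (if card (VV i) = 1 then (if AA i = VV i then VV' (g i) else {}) else AA i)"
  using compact_KS[OF assms] by (simp split: if_splits)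

lemma compact_edge_merged_iff:
  assumes j: "j \<le> l" and x: "x \<in> VV ix" "ix \<le> k" "g ix = j"
    and y: "y \<in> VV iy" "iy \<le> k" "g iy = j" and lt: "iy < ix"
  shows "{x, y} \<in> EE' j \<longleftrightarrow> {x, y} \<in> E"
proof -
  have ix: "1 \<le> ix" "card (VV ix) = 1" using lt card_eq_1_if_same_part[OF x(2) y(2)] x(3) y(3) by simp_all
  obtain z where "VV ix = {z}" using card_1_singletonE[OF ix(2)] .
  with x(1) have single: "VV ix = {x}" by simp
  have "{x, y} \<in> E \<longleftrightarrow> x \<in> AA ix" using edge_across_components_iff[OF x(2) lt x(1) y(1)] .
  also have "\<dots> \<longleftrightarrow> AA ix = VV ix" using single clique_subset[OF ix(1) x(2)] by auto
  also have "\<dots> \<longleftrightarrow> {x, y} \<in> EE' j"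
  proof -
    have "x \<noteq> y" using component_unique[OF x(1) _ x(2) y(2)] y(1) lt by blast
    moreover have "x \<in> VV' j" "y \<in> VV' j" using compact_vertices_iff[OF j] x y by blast+
    ultimately have "{x, y} \<in> complete_edges (VV' j)" unfolding complete_edges_def by blast
    then show ?thesis using compact_edges_singleton[OF ix(1) x(2) ix(2)] x(3) by simp
  qed
  finally show ?thesis ..
qed

lemma compact_edge_within_iff:
  assumes j: "j \<le> l" and u: "u \<in> VV' j" and v: "v \<in> VV' j"
  shows "{u, v} \<in> EE' j \<longleftrightarrow> {u, v} \<in> E"
proof -
  obtain iu where iu: "iu \<le> k" "g iu = j" "u \<in> VV iu" using compact_vertices_iff[OF j] u by blast
  obtain iv where iv: "iv \<le> k" "g iv = j" "v \<in> VV iv" using compact_vertices_iff[OF j] v by blast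
  consider "iu = iv" | "iv < iu" | "iu < iv" by linarith
  then show ?thesis
  proof cases
    case 1
    show ?thesis
    proof (cases "card (VV iu) = 1")
      case True
      obtain z where "VV iu = {z}" using card_1_singletonE[OF True] .
      with iu iv 1 have "v = u" by simp
      have "{u} \<notin> complete_edges (VV' j)" unfolding complete_edges_def by (auto simp: doubleton_eq_iff)
      then have "{u} \<notin> EE' j" using compact_edges[OF iu(1)] iu(2) True by auto
      then show ?thesis using \<open>v = u\<close> no_loop by simp
    next
      case False
      then show ?thesis
        using compact_part_nontrivial[OF iu(1) False] edge_within_component_iff[OF iu(1) iu(3)] iu(2) iv(3) 1
        by simp
    qed
  next
    case 2
    then show ?thesis using compact_edge_merged_iff[OF j iu(3,1,2) iv(3,1,2)] by simp
  next
    case 3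
    then show ?thesis using compact_edge_merged_iff[OF j iv(3,1,2) iu(3,1,2)] by (simp add: insert_commute)
  qed
qed

lemma compact_edge_across_iff:
  assumes j: "j \<le> l" and jj: "j' < j" and u: "u \<in> VV' j" and v: "v \<in> VV' j'"
  shows "{u, v} \<in> E \<longleftrightarrow> u \<in> AA' j"
proof -
  obtain iu where iu: "iu \<le> k" "g iu = j" "u \<in> VV iu" using compact_vertices_iff[OF j] u by blast
  obtain iv where iv: "iv \<le> k" "g iv = j'" "v \<in> VV iv" using compact_vertices_iff[of j'] j jj v by auto
  have lt: "iv < iu" using g_mono[of iu iv] iu iv jj by (meson not_less order.strict_iff_not)
  then have iu1: "1 \<le> iu" by simp
  have "{u, v} \<in> E \<longleftrightarrow> u \<in> AA iu" using edge_across_components_iff[OF iu(1) lt iu(3) iv(3)] .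
  also have "\<dots> \<longleftrightarrow> u \<in> AA' j"
  proof (cases "card (VV iu) = 1")
    case True
    obtain z where "VV iu = {z}" using card_1_singletonE[OF True] .
    with iu(3) have "VV iu = {u}" by simp
    then show ?thesis
      using compact_clique_eq[OF iu1 iu(1)] clique_subset[OF iu1 iu(1)] True u iu(2) by auto
  qed (use compact_clique_eq[OF iu1 iu(1)] iu(2) in simp)
  finally show ?thesis .
qed

lemma compact_automorphism_clique_iff:
  assumes j: "1 \<le> j" "j \<le> l" and h: "automorphism (VV' j) (EE' j) h" and u: "u \<in> VV' j"
  shows "h u \<in> AA' j \<longleftrightarrow> u \<in> AA' j"
proof -
  obtain i where i: "i \<le> k" "g i = j" using g_surj[OF j(2)] .
  have i1: "1 \<le> i" using i j g_0 by (cases i) auto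
  show ?thesis
  proof (cases "card (VV i) = 1")
    case True
    then show ?thesis
      using compact_clique_eq[OF i1 i(1)] i(2) automorphismD(4)[OF h u] u by simp
  next
    case False
    note part = compact_part_nontrivial[OF i(1) False, unfolded i(2)]
    have "automorphism (VV i) E h"
      using h edge_within_component_iff[OF i(1)] automorphism_edges_cong[of "VV i" "EE i" E h]
      unfolding part by blast
    moreover have AA_i: "split_module E (VV i) (VV i) (AA i)"
      using component_split_module[OF i1 i(1)] by blast
    ultimately have "split_module E (VV i) (VV i) (h ` AA i)"
      using split_module_image automorphismD(3) by metis
    then have "h ` AA i = AA i"
      using split_partition_unique[OF component_indecomposable_on[OF i(1)]
          component_card_ge_2[OF i(1) component_nonempty[OF i1 i(1)] False] AA_i] by blast
    moreover have "AA i \<subseteq> VV' j" using clique_subset[OF i1 i(1)] part i(2) by simp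
    then have "h u \<in> h ` AA i \<longleftrightarrow> u \<in> AA i"
      by (rule inj_on_image_mem_iff[OF automorphismD(2)[OF h] u])
    ultimately show ?thesis using compact_clique_eq[OF i1 i(1)] False i(2) by simp
  qed
qed

lemma compact_part_interval:
  assumes m: "1 \<le> m" "m \<le> l"
  obtains i0 i1 where "1 \<le> i0" "i0 \<le> i1" "i1 \<le> k" "\<And>i. i \<le> k \<Longrightarrow> g i = m \<longleftrightarrow> i0 \<le> i \<and> i \<le> i1"
    "\<not> merge_next k VV AA (i0 - 1)"
proof -
  let ?I = "{i. i \<le> k \<and> g i = m}"
  have fin: "finite ?I" by simp
  have ne: "?I \<noteq> {}" using g_surj[OF m(2)] by blast
  define i0 where "i0 = Min ?I"
  define i1 where "i1 = Max ?I"
  have i0: "i0 \<le> k" "g i0 = m" using Min_in[OF fin ne] unfolding i0_def by simp_all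
  have i1: "i1 \<le> k" "g i1 = m" using Max_in[OF fin ne] unfolding i1_def by simp_all
  have interval: "g i = m \<longleftrightarrow> i0 \<le> i \<and> i \<le> i1" if "i \<le> k" for i
  proof
    assume "g i = m"
    then show "i0 \<le> i \<and> i \<le> i1" unfolding i0_def i1_def using fin that by simp
  next
    assume "i0 \<le> i \<and> i \<le> i1"
    then show "g i = m" using g_mono[of i0 i] g_mono[of i i1] i0 i1 by simp
  qed
  have "1 \<le> i0" using i0 m g_0 by (cases i0) auto
  moreover have "\<not> merge_next k VV AA (i0 - 1)"
  proof
    assume "merge_next k VV AA (i0 - 1)"
    then have "g (i0 - 1) = m" using g_Suc[of "i0 - 1"] \<open>1 \<le> i0\<close> i0 unfolding merge_next_def by simp
    moreover have "i0 - 1 \<le> k" using i0 by simp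
    ultimately show False using interval[of "i0 - 1"] \<open>1 \<le> i0\<close> by linarith
  qed
  moreover have "i0 \<le> i1" using interval i0 by blast
  ultimately show ?thesis using that i1(1) interval by blast
qed

lemma merged_part_same_type:
  assumes run: "1 \<le> i0" "i0 \<le> i" "i \<le> i1" "i1 \<le> k" "\<And>i. i0 \<le> i \<Longrightarrow> i \<le> i1 \<Longrightarrow> g i = g i0"
  shows "AA i = VV i \<longleftrightarrow> AA i0 = VV i0"
  using run(2)
proof (induction rule: dec_induct)
  case (step n)
  then have "merge_next k VV AA n"
    using merge_next_if_same_part[of n n "Suc n"] run(3,4) run(5)[of n] run(5)[of "Suc n"] by simp
  then show ?case using step run(1) unfolding merge_next_def by simp
qed simp

lemma compact_part_eq_run:
  assumes m: "m \<le> l" and run: "i1 \<le> k" "\<And>i. i \<le> k \<Longrightarrow> g i = m \<longleftrightarrow> i0 \<le> i \<and> i \<le> i1"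
  shows "VV' m = (\<Union>i\<in>{i0..i1}. VV i)"
proof -
  have "{i. i \<le> k \<and> g i = m} = {i0..i1}"
  proof (intro equalityI subsetI)
    fix i assume "i \<in> {i. i \<le> k \<and> g i = m}"
    then show "i \<in> {i0..i1}" using run(2)[of i] by simp
  next
    fix i assume "i \<in> {i0..i1}"
    then show "i \<in> {i. i \<le> k \<and> g i = m}" using run(2)[of i] run(1) by simp
  qed
  then show ?thesis using compact_vertices[OF m] by simp
qed

lemma compact_prefix_eq_run_prefix:
  assumes m: "m \<le> l" and run: "i0 \<le> i1" "i1 \<le> k" "\<And>i. i \<le> k \<Longrightarrow> g i = m \<longleftrightarrow> i0 \<le> i \<and> i \<le> i1"
  shows "(\<Union>j\<le>m. VV' j) = (\<Union>i\<le>i1. VV i)"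
proof -
  have below: "g i \<le> m \<longleftrightarrow> i \<le> i1" if "i \<le> k" for i
    using g_mono[of i i1] g_mono[of i1 i] run(3)[of i] run(3)[of i1] run(1,2) that
    by (cases "i \<le> i1") auto
  show ?thesis
  proof (intro equalityI subsetI)
    fix x assume "x \<in> (\<Union>j\<le>m. VV' j)"
    then obtain j where "j \<le> m" "x \<in> VV' j" by blast
    moreover from this obtain i where "i \<le> k" "g i = j" "x \<in> VV i"
      using compact_vertices_iff[of j] m by auto
    ultimately show "x \<in> (\<Union>i\<le>i1. VV i)" using below[of i] by auto
  next
    fix x assume "x \<in> (\<Union>i\<le>i1. VV i)"
    then obtain i where i: "i \<le> i1" "x \<in> VV i" by blast
    then have ik: "i \<le> k" using run(2) by simp
    then have "x \<in> VV' (g i)" using compact_vertices_iff[OF g_le[OF ik]] i(2) by blast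
    moreover have "g i \<le> m" using below[OF ik] i(1) by simp
    ultimately show "x \<in> (\<Union>j\<le>m. VV' j)" by blast
  qed
qed

lemma compact_run_cases:
  assumes run: "1 \<le> i0" "i0 \<le> i1" "i1 \<le> k" "\<And>i. i0 \<le> i \<Longrightarrow> i \<le> i1 \<Longrightarrow> g i = g i0"
    and first: "\<not> merge_next k VV AA (i0 - 1)"
  obtains (single) "i0 = i1" "card (VV i0) \<noteq> 1"
    | (clique) "\<And>i. i0 \<le> i \<Longrightarrow> i \<le> i1 \<Longrightarrow> AA i = VV i" "universal_vertices E (\<Union>i\<le>i0 - 1. VV i) = {}"
    | (independent) "\<And>i. i0 \<le> i \<Longrightarrow> i \<le> i1 \<Longrightarrow> AA i = {}" "isolated_vertices E (\<Union>i\<le>i0 - 1. VV i) = {}"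
proof (cases "i0 = i1 \<and> card (VV i0) \<noteq> 1")
  case False
  have singleton: "card (VV i) = 1" if "i0 \<le> i" "i \<le> i1" for i
  proof (cases "i = i0")
    case True
    show ?thesis
    proof (cases "i0 = i1")
      case False
      then show ?thesis using card_eq_1_if_same_part[of i0 i1] run(2,3) run(4)[of i1] True by simp
    qed (use False True in simp)
  next
    case False
    then show ?thesis using card_eq_1_if_same_part[of i i0] run(2,3) run(4)[OF that] that by simp
  qed
  have same_type: "AA i = VV i \<longleftrightarrow> AA i0 = VV i0" if "i0 \<le> i" "i \<le> i1" for i
    using merged_part_same_type[OF run(1) that run(3,4)] .
  have clique_or_empty: "AA i = VV i \<or> AA i = {}" if "i0 \<le> i" "i \<le> i1" for i
    using card_1_singletonE[OF singleton[OF that]] clique_subset[of i] run(1,3) that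
    by (metis order.trans subset_singletonD)
  have j: "i0 - 1 < k" "Suc (i0 - 1) = i0" using run(1,2,3) by simp_all
  have not_merged: "\<not> (card (VV (i0 - 1)) = 1 \<and> (i0 - 1 = 0 \<or> (AA (i0 - 1) = VV (i0 - 1) \<longleftrightarrow> AA i0 = VV i0)))"
    using first[unfolded merge_next_def j(2)] j(1) singleton[of i0] run(2) by blast
  show ?thesis
  proof (cases "AA i0 = VV i0")
    case True
    have "AA i = VV i" if "i0 \<le> i" "i \<le> i1" for i using same_type[OF that] True by blast
    moreover have "\<not> (card (VV (i0 - 1)) = 1 \<and> (i0 - 1 = 0 \<or> AA (i0 - 1) = VV (i0 - 1)))"
      using not_merged True by blast
    then have "universal_vertices E (\<Union>i\<le>i0 - 1. VV i) = {}"
      by (rule universal_vertices_below_empty[OF less_imp_le[OF j(1)]])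
    ultimately show ?thesis by (rule clique)
  next
    case False
    have "AA i = {}" if "i0 \<le> i" "i \<le> i1" for i using same_type[OF that] clique_or_empty[OF that] False by auto
    moreover have "\<not> (card (VV (i0 - 1)) = 1 \<and> (i0 - 1 = 0 \<or> AA (i0 - 1) = {}))"
      using not_merged False by fastforce
    then have "isolated_vertices E (\<Union>i\<le>i0 - 1. VV i) = {}"
      by (rule isolated_vertices_below_empty[OF less_imp_le[OF j(1)]])
    ultimately show ?thesis by (rule independent)
  qed
qed (use single in blast)

lemma compact_prefix_Suc:
  assumes "Suc n \<le> l"
  shows "(\<Union>i\<le>n. VV' i) = (\<Union>i\<le>Suc n. VV' i) - VV' (Suc n)"
proof -
  have "VV' i \<inter> VV' (Suc n) = {}" if "i \<le> n" for i
    using compact_parts_disjoint[of i "Suc n"] that assms by simp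
  then show ?thesis by (auto simp: atMost_Suc)
qed

lemma automorphism_image_top_part:
  assumes m: "1 \<le> m" "m \<le> l" and f: "automorphism (\<Union>j\<le>m. VV' j) E f"
  shows "f ` VV' m = VV' m"
proof -
  obtain i0 i1 where run: "1 \<le> i0" "i0 \<le> i1" "i1 \<le> k"
    and part: "\<And>i. i \<le> k \<Longrightarrow> g i = m \<longleftrightarrow> i0 \<le> i \<and> i \<le> i1" and first: "\<not> merge_next k VV AA (i0 - 1)"
    using compact_part_interval[OF m] by blast
  have VV'_m: "VV' m = (\<Union>i\<in>{i0..i1}. VV i)" using compact_part_eq_run[OF m(2) run(3) part] .
  have prefix: "(\<Union>j\<le>m. VV' j) = (\<Union>i\<le>i1. VV i)"
    using compact_prefix_eq_run_prefix[OF m(2) run(2,3) part] .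
  have same_part: "g i = g i0" if "i0 \<le> i" "i \<le> i1" for i
    using part[of i] part[of i0] that run by simp
  note f = f[unfolded prefix]
  show ?thesis
  proof (rule compact_run_cases[OF run same_part first])
    assume single: "i0 = i1" "card (VV i0) \<noteq> 1"
    \<comment> \<open>a nontrivial top component is a module that cannot be moved\<close>
    have i0: "i0 \<le> k" using run by simp
    have "split_module E (\<Union>i\<le>i1. VV i) (VV i0) (AA i0)"
      by (rule component_split_module[OF run(1) i0]) (use single(1) in auto)
    then have "f ` VV i0 = VV i0"
      using automorphism_image_indecomposable_module[OF f component_indecomposable_on[OF i0]]
        component_card_ge_2[OF i0 component_nonempty[OF run(1) i0] single(2)] by blast
    then show ?thesis using VV'_m single(1) by simp
  next
    assume "\<And>i. i0 \<le> i \<Longrightarrow> i \<le> i1 \<Longrightarrow> AA i = VV i" "universal_vertices E (\<Union>i\<le>i0 - 1. VV i) = {}"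
    then have "VV' m = universal_vertices E (\<Union>i\<le>i1. VV i)"
      using universal_vertices_clique_run[OF run] VV'_m by simp
    then show ?thesis using automorphism_image_universal_vertices[OF f] by simp
  next
    assume "\<And>i. i0 \<le> i \<Longrightarrow> i \<le> i1 \<Longrightarrow> AA i = {}" "isolated_vertices E (\<Union>i\<le>i0 - 1. VV i) = {}"
    then have "VV' m = isolated_vertices E (\<Union>i\<le>i1. VV i)"
      using isolated_vertices_independent_run[OF run] VV'_m by simp
    then show ?thesis using automorphism_image_isolated_vertices[OF f] by simp
  qed
qed

lemma automorphism_image_compact_part:
  assumes f: "automorphism V E f" and j: "j \<le> l"
  shows "f ` VV' j = VV' j"
proof -
  have prefix: "f ` (\<Union>i\<le>m. VV' i) = (\<Union>i\<le>m. VV' i)" if "m \<le> l" for m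
    using that
  proof (induction rule: inc_induct)
    case base
    show ?case using automorphismD(3)[OF f] compact_vertices_eq by simp
  next
    case (step n)
    let ?L = "\<Union>i\<le>Suc n. VV' i"
    have sub: "?L \<subseteq> V" and top: "VV' (Suc n) \<subseteq> ?L" using compact_vertices_eq step by auto
    have aut: "automorphism ?L E f" using automorphism_restrict[OF f sub step.IH] .
    have "f ` (?L - VV' (Suc n)) = f ` ?L - f ` VV' (Suc n)"
      using inj_on_image_set_diff[OF automorphismD(2)[OF aut]] top by blast
    also have "\<dots> = ?L - VV' (Suc n)"
      using step.IH automorphism_image_top_part[OF _ _ aut] step(2) by simp
    finally show ?case unfolding compact_prefix_Suc[OF Suc_leI[OF step(2)]] .
  qed
  show ?thesis
  proof (cases "j = 0")
    case True
    then show ?thesis using prefix[of 0] by simp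
  next
    case False
    have "(\<Union>i\<le>j. VV' i) \<subseteq> V" unfolding compact_vertices_eq using j by (intro UN_mono) auto
    then have "automorphism (\<Union>i\<le>j. VV' i) E f" using automorphism_restrict[OF f _ prefix[OF j]] by blast
    then show ?thesis using automorphism_image_top_part False j by simp
  qed
qed

end

sublocale compact_decomposition \<subseteq> compact: aut_stable_composition V E l VV' EE' AA'
proof
  show "finite V" using graph unfolding graph_def by blast
qed (use compact_parts_disjoint compact_vertices_eq compact_edge_within_iff compact_edge_across_iff
    compact_automorphism_clique_iff automorphism_image_compact_part in auto)

theorem mainTheorem7:
  fixes V :: "'a set" and E :: "'a set set" and l :: nat
    and VV' :: "nat \<Rightarrow> 'a set" and EE' :: "nat \<Rightarrow> 'a set set"
    and AA' BB' :: "nat \<Rightarrow> 'a set"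
  assumes "graph V E"
    and "compact_canon_decomp V E l VV' EE' AA' BB'"
  shows "(\<forall>S. S \<subseteq> V \<longrightarrow>
            (fixing_set V E S \<longleftrightarrow> (\<forall>i\<le>l. fixing_set (VV' i) (EE' i) (S \<inter> VV' i))))
         \<and> Fix V E = (\<Sum>i\<le>l. Fix (VV' i) (EE' i))"
proof -
  obtain k VV EE AA BB g where "compact_decomposition V E k VV EE AA BB l VV' EE' AA' BB' g"
    using compact_decompositionE[OF assms] .
  then interpret compact_decomposition V E k VV EE AA BB l VV' EE' AA' BB' g .
  show ?thesis using compact.fixing_set_iff_parts compact.Fix_eq_sum_parts by blast
qed

end
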